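(* For every positive integer $n$, the set $\{S_\alpha : \alpha \models n\}$ of shuffle functions is a basis of the vector space $\mathrm{QSym}_n$.
   Context: A composition $\alpha=(\alpha_1,\dots,\alpha_\ell)$ of $n$ (written $\alpha\models n$) is a finite sequence of positive integers summing to $n$; $\ell(\alpha)=\ell$ is its length. Set $\mathcal{I}(\alpha)=\{\alpha_1,\alpha_1+\alpha_2,\dots,\alpha_1+\cdots+\alpha_{\ell-1}\}\subseteq[n-1]$. For $\alpha,\beta\models n$ write $\beta\le\alpha$ if $\mathcal{I}(\beta)\subseteq\mathcal{I}(\alpha)$ (i.e. $\alpha$ refines $\beta$). The monomial quasisymmetric function is $M_\alpha=\sum_{i_1<\cdots<i_\ell}x_{i_1}^{\alpha_1}\cdots x_{i_\ell}^{\alpha_\ell}$ (in commuting variables $x_1,x_2,\dots$), and $\mathrm{QSym}_n$ is the $\mathbb{C}$-span of $\{M_\alpha:\alpha\models n\}$. For a composition $\alpha=(\alpha_1,\dots,\alpha_\ell)$ let $\mathrm{OtE}(\alpha)=\{i:\alpha_i\text{ odd},\ \alpha_{i+1}\text{ even}\}$. If $\mathrm{OtE}(\alpha)=\{i_1<\cdots<i_k\}$, the odd-min composition is $m_o(\alpha)=(\alpha_1+\cdots+\alpha_{i_1},\ \alpha_{i_1+1}+\cdots+\alpha_{i_2},\ \dots,\ \alpha_{i_k+1}+\cdots+\alpha_\ell)$. For $\beta=(\beta_1,\dots,\beta_p)$ with $m_o(\alpha)\le\beta\le\alpha$, each $\beta_i$ is the sum of a block of consecutive parts of $\alpha$; let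 $\mathrm{O}^\beta_\alpha(i)$ and $\mathrm{E}^\beta_\alpha(i)$ be the numbers of odd and even parts in that block, and set $c_\alpha^\beta=\prod_i \frac{1}{\mathrm{O}^\beta_\alpha(i)!\,\mathrm{E}^\beta_\alpha(i)!}$. The shuffle function is $S_\alpha=\sum_{m_o(\alpha)\le\beta\le\alpha} c_\alpha^\beta M_\beta$. *)

theory Defs
  imports Complex_Main "HOL-Library.Function_Algebras"
begin

text \<open>Monomials in commuting variables x_0, x_1, ... are exponent vectors
  nat => nat (only finitely supported ones are genuine monomials).\<close>

type_synonym monom = "nat \<Rightarrow> nat"
type_synonym fps_inf = "monom \<Rightarrow> complex"

definition scaleF :: "complex \<Rightarrow> fps_inf \<Rightarrow> fps_inf" where
  "scaleF c f = (\<lambda>m. c * f m)"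

definition is_comp :: "nat \<Rightarrow> nat list \<Rightarrow> bool" where
  "is_comp n \<alpha> \<longleftrightarrow> (\<forall>a\<in>set \<alpha>. 0 < a) \<and> sum_list \<alpha> = n"

definition comps :: "nat \<Rightarrow> nat list set" where
  "comps n = {\<alpha>. is_comp n \<alpha>}"

definition Iset :: "nat list \<Rightarrow> nat set" where
  "Iset \<alpha> = {sum_list (take k \<alpha>) | k. 0 < k \<and> k < length \<alpha>}"

definition comp_le :: "nat list \<Rightarrow> nat list \<Rightarrow> bool" where
  "comp_le \<beta> \<alpha> \<longleftrightarrow> Iset \<beta> \<subseteq> Iset \<alpha>"

definition exps :: "monom \<Rightarrow> nat list" where
  "exps m = map m (sorted_list_of_set {i. m i \<noteq> 0})"

definition Mqs :: "nat list \<Rightarrow> fps_inf" where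
  "Mqs \<alpha> = (\<lambda>m. if finite {i. m i \<noteq> 0} \<and> exps m = \<alpha> then 1 else 0)"

definition QSym :: "nat \<Rightarrow> fps_inf set" where
  "QSym n = module.span scaleF (Mqs ` comps n)"

definition comp_of_set :: "nat \<Rightarrow> nat set \<Rightarrow> nat list" where
  "comp_of_set n D = (let L = sorted_list_of_set (insert 0 (insert n D))
                      in map2 (\<lambda>a b. b - a) L (tl L))"

text \<open>OtE(alpha), 0-indexed: positions i (part alpha!i odd, alpha!(i+1) even).\<close>
definition OtE :: "nat list \<Rightarrow> nat set" where
  "OtE \<alpha> = {i. Suc i < length \<alpha> \<and> odd (\<alpha> ! i) \<and> even (\<alpha> ! Suc i)}"

definition odd_min :: "nat list \<Rightarrow> nat list" where
  "odd_min \<alpha> = comp_of_set (sum_list \<alpha>) ((\<lambda>i. sum_list (take (Suc i) \<alpha>)) ` OtE \<alpha>)"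

definition block :: "nat list \<Rightarrow> nat list \<Rightarrow> nat \<Rightarrow> nat set" where
  "block \<alpha> \<beta> j = {k. k < length \<alpha> \<and> sum_list (take j \<beta>) < sum_list (take (Suc k) \<alpha>)
                      \<and> sum_list (take (Suc k) \<alpha>) \<le> sum_list (take (Suc j) \<beta>)}"

definition Ocount :: "nat list \<Rightarrow> nat list \<Rightarrow> nat \<Rightarrow> nat" where
  "Ocount \<alpha> \<beta> j = card {k \<in> block \<alpha> \<beta> j. odd (\<alpha> ! k)}"

definition Ecount :: "nat list \<Rightarrow> nat list \<Rightarrow> nat \<Rightarrow> nat" where
  "Ecount \<alpha> \<beta> j = card {k \<in> block \<alpha> \<beta> j. even (\<alpha> ! k)}"

definition coef :: "nat list \<Rightarrow> nat list \<Rightarrow> complex" where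
  "coef \<alpha> \<beta> = (\<Prod>j<length \<beta>. 1 / (of_nat (fact (Ocount \<alpha> \<beta> j)) * of_nat (fact (Ecount \<alpha> \<beta> j))))"

definition Sshuf :: "nat list \<Rightarrow> fps_inf" where
  "Sshuf \<alpha> = (\<lambda>m. \<Sum>\<beta>\<in>{\<beta>. is_comp (sum_list \<alpha>) \<beta> \<and> comp_le (odd_min \<alpha>) \<beta> \<and> comp_le \<beta> \<alpha>}.
                    coef \<alpha> \<beta> * Mqs \<beta> m)"

end

theory Submission
  imports Defs
begin

(* Relative to refinement, the shuffle functions are unitriangular in the monomial basis:
   S_alpha = M_alpha + (a combination of M_beta with beta strictly coarser than alpha), since the
   summation range m_o(alpha) <= beta <= alpha consists of coarsenings of alpha and c_alpha^alpha = 1,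
   every block of alpha against itself being a single part. Induction on the number of parts puts
   each M_alpha into the span of the S_alpha, so the S_alpha span QSym_n. The M_alpha are independent
   (M_alpha is the only one not vanishing at the monomial with exponent sequence alpha), so QSym_n has
   dimension #{alpha |= n}, and a spanning family of at most that many vectors is independent. *)

interpretation F: vector_space scaleF
  by unfold_locales (auto simp: scaleF_def fun_eq_iff algebra_simps)

lemma (in vector_space) independent_if_card_le_dim:
  assumes "finite B" "card B \<le> dim B"
  shows "independent B"
proof
  assume "dependent B"
  then obtain a where a: "a \<in> B" "a \<in> span (B - {a})"
    unfolding dependent_def by blast
  have "B \<subseteq> span (B - {a})"
  proof
    fix b assume "b \<in> B"
    then show "b \<in> span (B - {a})"
      using a(2) by (cases "b = a") (simp_all add: span_base)
  qed
  then have "dim B \<le> card (B - {a})"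
    using assms(1) by (intro dim_le_card) simp_all
  also have "\<dots> < card B"
    using assms(1) a(1) by (rule card_Diff1_less)
  finally show False
    using assms(2) by simp
qed

lemma sum_apply: "(\<Sum>x\<in>A. f x) y = (\<Sum>x\<in>A. f x y)"
  for f :: "'a \<Rightarrow> 'b \<Rightarrow> 'c::comm_monoid_add"
  by (induction A rule: infinite_finite_induct) auto

lemma strict_mono_on_partial_sums:
  assumes "\<forall>a\<in>set xs. 0 < (a::nat)"
  shows "strict_mono_on {..length xs} (\<lambda>k. sum_list (take k xs))"
proof (rule strict_mono_onI)
  fix j k assume "j \<in> {..length xs}" "k \<in> {..length xs}" "j < k"
  then have j: "j < length xs" by simp
  have "take k xs = take j xs @ take (Suc (k - Suc j)) (drop j xs)"
    using take_add[of j "k - j" xs] \<open>j < k\<close> by (simp add: Suc_diff_Suc)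
  also have "\<dots> = take j xs @ xs ! j # take (k - Suc j) (drop (Suc j) xs)"
    using j by (simp add: Cons_nth_drop_Suc[symmetric])
  finally have "sum_list (take k xs)
      = sum_list (take j xs) + xs ! j + sum_list (take (k - Suc j) (drop (Suc j) xs))"
    by simp
  moreover have "0 < xs ! j"
    using assms j by simp
  ultimately show "sum_list (take j xs) < sum_list (take k xs)"
    by simp
qed

lemma Iset_eq_image: "Iset xs = (\<lambda>k. sum_list (take k xs)) ` {0<..<length xs}"
  by (auto simp: Iset_def)

lemma Iset_Nil [simp]: "Iset [] = {}"
  by (simp add: Iset_def)

lemma finite_Iset: "finite (Iset xs)"
  by (simp add: Iset_eq_image)

lemma Iset_Cons: "Iset (a # xs) = (if xs = [] then {} else insert a ((+) a ` Iset xs))"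
proof -
  have "{0<..<length (a # xs)} = Suc ` {..<length xs}"
    by (auto simp: image_iff gr0_conv_Suc)
  then have "Iset (a # xs) = (\<lambda>k. a + sum_list (take k xs)) ` {..<length xs}"
    by (simp add: Iset_eq_image image_image)
  moreover have "xs \<noteq> [] \<Longrightarrow> {..<length xs} = insert 0 {0<..<length xs}"
    by auto
  ultimately show ?thesis
    by (auto simp: Iset_eq_image image_image)
qed

lemma Iset_pos: "\<forall>a\<in>set xs. 0 < (a::nat) \<Longrightarrow> x \<in> Iset xs \<Longrightarrow> 0 < x"
  by (induction xs arbitrary: x) (auto simp: Iset_Cons split: if_splits)

lemma Iset_Cons_recover:
  assumes "\<forall>x\<in>set xs. 0 < x" "xs \<noteq> []"
  shows "Min (Iset (a # xs)) = a" "Iset xs = (\<lambda>x. x - a) ` (Iset (a # xs) - {a})"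
proof -
  have "a \<notin> (+) a ` Iset xs"
    using Iset_pos[OF assms(1)] by force
  then have "Iset (a # xs) - {a} = (+) a ` Iset xs"
    using assms(2) by (simp add: Iset_Cons)
  then show "Iset xs = (\<lambda>x. x - a) ` (Iset (a # xs) - {a})"
    by (simp add: image_image)
  show "Min (Iset (a # xs)) = a"
    using assms(2) by (intro Min_eqI) (auto simp: Iset_Cons finite_Iset)
qed

lemma comp_eq_if_Iset_eq:
  assumes "is_comp n xs" "is_comp n ys" "Iset xs = Iset ys"
  shows "xs = ys"
  using assms
proof (induction xs arbitrary: n ys)
  case Nil
  then show ?case
    by (cases ys) (auto simp: is_comp_def)
next
  case (Cons a xs)
  then obtain b ys' where ys: "ys = b # ys'"
    by (cases ys) (auto simp: is_comp_def)
  show ?case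
  proof (cases "xs = []")
    case True
    then show ?thesis
      using Cons.prems ys by (auto simp: is_comp_def Iset_Cons split: if_splits)
  next
    case False
    with Cons.prems ys have "ys' \<noteq> []"
      by (auto simp: Iset_Cons split: if_splits)
    have pos: "\<forall>x\<in>set xs. 0 < x" "\<forall>x\<in>set ys'. 0 < x"
      using Cons.prems ys by (auto simp: is_comp_def)
    have "a = b"
      using Iset_Cons_recover(1)[OF pos(1) False, of a]
        Iset_Cons_recover(1)[OF pos(2) \<open>ys' \<noteq> []\<close>, of b] Cons.prems(3) ys
      by metis
    moreover have "Iset xs = Iset ys'"
      using Iset_Cons_recover(2)[OF pos(1) False, of a]
        Iset_Cons_recover(2)[OF pos(2) \<open>ys' \<noteq> []\<close>, of b] Cons.prems(3) ys \<open>a = b\<close>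
      by metis
    moreover have "is_comp (n - a) xs" "is_comp (n - a) ys'"
      using Cons.prems ys \<open>a = b\<close> by (auto simp: is_comp_def)
    ultimately show ?thesis
      using Cons.IH ys by blast
  qed
qed

lemma comps_pos: "\<alpha> \<in> comps n \<Longrightarrow> \<forall>a\<in>set \<alpha>. 0 < a"
  by (simp add: comps_def is_comp_def)

lemma finite_comps: "finite (comps n)"
proof -
  have "length \<alpha> \<le> sum_list \<alpha>" if "\<forall>a\<in>set \<alpha>. 0 < a" for \<alpha> :: "nat list"
    using that by (induction \<alpha>) auto
  then have "comps n \<subseteq> {\<alpha>. set \<alpha> \<subseteq> {..n} \<and> length \<alpha> \<le> n}"
    using member_le_sum_list by (fastforce simp: comps_def is_comp_def)
  then show ?thesis
    by (rule finite_subset) (simp add: finite_lists_length_le)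
qed

definition monom_of :: "nat list \<Rightarrow> monom" where
  "monom_of \<alpha> = (\<lambda>i. if i < length \<alpha> then \<alpha> ! i else 0)"

lemma Mqs_monom_of:
  assumes "\<forall>a\<in>set \<beta>. 0 < a"
  shows "Mqs \<alpha> (monom_of \<beta>) = (if \<alpha> = \<beta> then 1 else 0)"
proof -
  have support: "{i. monom_of \<beta> i \<noteq> 0} = {0..<length \<beta>}"
    using assms by (auto simp: monom_of_def)
  have "exps (monom_of \<beta>) = map (monom_of \<beta>) [0..<length \<beta>]"
    unfolding exps_def support by (simp only: sorted_list_of_set_range)
  also have "\<dots> = \<beta>"
    by (rule nth_equalityI) (auto simp: monom_of_def)
  finally show ?thesis
    using support by (auto simp: Mqs_def)
qed

lemma inj_on_Mqs:
  assumes "\<And>\<beta>. \<beta> \<in> C \<Longrightarrow> \<forall>a\<in>set \<beta>. 0 < a"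
  shows "inj_on Mqs C"
proof (rule inj_onI)
  fix \<alpha> \<beta> assume "\<alpha> \<in> C" "\<beta> \<in> C" "Mqs \<alpha> = Mqs \<beta>"
  then have "Mqs \<alpha> (monom_of \<beta>) = Mqs \<beta> (monom_of \<beta>)"
    by simp
  then show "\<alpha> = \<beta>"
    using Mqs_monom_of[OF assms[OF \<open>\<beta> \<in> C\<close>]] by (simp split: if_splits)
qed

lemma independent_Mqs:
  assumes "finite C" "\<And>\<beta>. \<beta> \<in> C \<Longrightarrow> \<forall>a\<in>set \<beta>. 0 < a"
  shows "F.independent (Mqs ` C)"
proof -
  have "u v = 0" if lincomb: "(\<Sum>w\<in>Mqs ` C. scaleF (u w) w) = 0" and "v \<in> Mqs ` C" for u v
  proof -
    from \<open>v \<in> Mqs ` C\<close> obtain \<beta> where "\<beta> \<in> C" "v = Mqs \<beta>"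
      by blast
    have "u v = (\<Sum>w\<in>Mqs ` C. if w = v then u w else 0)"
      using assms(1) \<open>v \<in> Mqs ` C\<close> by simp
    also have "\<dots> = (\<Sum>w\<in>Mqs ` C. u w * w (monom_of \<beta>))"
    proof (rule sum.cong)
      fix w assume "w \<in> Mqs ` C"
      then obtain \<gamma> where "\<gamma> \<in> C" "w = Mqs \<gamma>"
        by blast
      then show "(if w = v then u w else 0) = u w * w (monom_of \<beta>)"
        using Mqs_monom_of[OF assms(2)[OF \<open>\<beta> \<in> C\<close>]] \<open>v = Mqs \<beta>\<close> \<open>\<beta> \<in> C\<close>
          inj_on_eq_iff[OF inj_on_Mqs[OF assms(2)]] by auto
    qed simp
    also have "\<dots> = (\<Sum>w\<in>Mqs ` C. scaleF (u w) w) (monom_of \<beta>)"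
      by (simp add: sum_apply scaleF_def)
    also have "\<dots> = 0"
      by (simp add: lincomb)
    finally show "u v = 0" .
  qed
  then show ?thesis
    using assms(1) by (intro F.independent_if_scalars_zero) simp_all
qed

lemma dim_QSym: "F.dim (QSym n) = card (comps n)"
proof -
  have "F.dim (QSym n) = card (Mqs ` comps n)"
    unfolding QSym_def
    by (rule F.dim_span_eq_card_independent) (rule independent_Mqs[OF finite_comps comps_pos])
  also have "\<dots> = card (comps n)"
    by (rule card_image) (rule inj_on_Mqs[OF comps_pos])
  finally show ?thesis .
qed

lemma block_self:
  assumes "\<forall>a\<in>set xs. 0 < (a::nat)" "j < length xs"
  shows "block xs xs j = {j}"
  using assms(2) strict_mono_on_less[OF strict_mono_on_partial_sums[OF assms(1)]]
    strict_mono_on_less_eq[OF strict_mono_on_partial_sums[OF assms(1)]]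
  by (auto simp: block_def)

lemma coef_self:
  assumes "\<forall>a\<in>set xs. 0 < (a::nat)"
  shows "coef xs xs = 1"
proof -
  have "{k \<in> {j}. P k} = (if P j then {j} else {})" for j and P :: "nat \<Rightarrow> bool"
    by auto
  then have "fact (card {k \<in> {j}. P k}) = (1::nat)" for j and P :: "nat \<Rightarrow> bool"
    by simp
  then show ?thesis
    using block_self[OF assms] by (simp add: coef_def Ocount_def Ecount_def)
qed

lemma sum_take_differences:
  assumes "sorted (L::nat list)" "k < length L"
  shows "sum_list (take k (map2 (\<lambda>a b. b - a) L (tl L))) = L ! k - L ! 0"
  using assms(2)
proof (induction k)
  case (Suc k)
  have "L ! 0 \<le> L ! k" "L ! k \<le> L ! Suc k"
    using assms(1) Suc.prems by (auto intro: sorted_nth_mono)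
  moreover have "map2 (\<lambda>a b. b - a) L (tl L) ! k = L ! Suc k - L ! k"
    using Suc.prems by (simp add: nth_tl)
  ultimately show ?case
    using Suc by (simp add: take_Suc_conv_app_nth)
qed simp

lemma Iset_comp_of_set_subset:
  assumes "finite D" "D \<subseteq> {..n}"
  shows "Iset (comp_of_set n D) \<subseteq> D"
proof
  define L where "L = sorted_list_of_set (insert 0 (insert n D))"
  have strict: "sorted_wrt (<) L" and "sorted L"
    unfolding L_def by (rule strict_sorted_list_of_set, rule sorted_sorted_list_of_set)
  have setL: "set L = insert 0 (insert n D)"
    unfolding L_def using assms(1) by (simp only: set_sorted_list_of_set finite_insert)
  have "L ! 0 = 0"
    using assms(1) by (simp add: L_def sorted_list_of_set_nonempty)
  fix x assume "x \<in> Iset (comp_of_set n D)"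
  then obtain k where k: "0 < k" "k < length L - 1"
    and "x = sum_list (take k (map2 (\<lambda>a b. b - a) L (tl L)))"
    by (auto simp: Iset_def comp_of_set_def Let_def L_def)
  then have "x = L ! k"
    using sum_take_differences[OF \<open>sorted L\<close>] \<open>L ! 0 = 0\<close> by simp
  moreover have "L ! 0 < L ! k" "L ! k < L ! (length L - 1)"
    using k sorted_wrt_nth_less[OF strict] by auto
  moreover have "L ! (length L - 1) \<le> n"
  proof -
    have "set L \<subseteq> {..n}"
      using setL assms(2) by auto
    moreover have "length L - 1 < length L"
      using k by simp
    ultimately show ?thesis
      by (meson atMost_iff nth_mem subsetD)
  qed
  ultimately show "x \<in> D"
    using k setL nth_mem[of k L] \<open>L ! 0 = 0\<close> by auto
qed

lemma comp_le_odd_min: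
  assumes "is_comp n \<alpha>"
  shows "comp_le (odd_min \<alpha>) \<alpha>"
proof -
  let ?D = "(\<lambda>i. sum_list (take (Suc i) \<alpha>)) ` OtE \<alpha>"
  have "?D \<subseteq> Iset \<alpha>"
    by (auto simp: OtE_def Iset_def)
  moreover have "Iset \<alpha> \<subseteq> {..n}"
    using assms by (auto simp: Iset_def is_comp_def) (metis append_take_drop_id sum_list_append le_add1)
  ultimately have "Iset (odd_min \<alpha>) \<subseteq> ?D"
    using assms finite_Iset finite_subset unfolding odd_min_def is_comp_def
    by (metis Iset_comp_of_set_subset order_trans)
  with \<open>?D \<subseteq> Iset \<alpha>\<close> show ?thesis
    by (simp add: comp_le_def)
qed

definition shuffle_support :: "nat list \<Rightarrow> nat list set" where
  "shuffle_support \<alpha> = {\<beta>. is_comp (sum_list \<alpha>) \<beta> \<and> comp_le (odd_min \<alpha>) \<beta> \<and> comp_le \<beta> \<alpha>}"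

lemma Sshuf_eq_sum: "Sshuf \<alpha> = (\<Sum>\<beta>\<in>shuffle_support \<alpha>. scaleF (coef \<alpha> \<beta>) (Mqs \<beta>))"
  by (simp add: fun_eq_iff sum_apply scaleF_def Sshuf_def shuffle_support_def)

lemma shuffle_support_subset_comps: "\<alpha> \<in> comps n \<Longrightarrow> shuffle_support \<alpha> \<subseteq> comps n"
  by (auto simp: shuffle_support_def comps_def is_comp_def)

lemma self_in_shuffle_support: "\<alpha> \<in> comps n \<Longrightarrow> \<alpha> \<in> shuffle_support \<alpha>"
  using comp_le_odd_min[of n \<alpha>] by (auto simp: shuffle_support_def comps_def is_comp_def comp_le_def)

lemma Iset_psubset_if_in_shuffle_support:
  assumes "\<alpha> \<in> comps n" "\<beta> \<in> shuffle_support \<alpha>" "\<beta> \<noteq> \<alpha>"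
  shows "Iset \<beta> \<subset> Iset \<alpha>"
  using assms comp_eq_if_Iset_eq[of n \<beta> \<alpha>] shuffle_support_subset_comps[OF assms(1)]
  by (auto simp: shuffle_support_def comp_le_def comps_def)

lemma Sshuf_unitriangular:
  assumes "\<alpha> \<in> comps n"
  shows "Sshuf \<alpha> = Mqs \<alpha> + (\<Sum>\<beta>\<in>shuffle_support \<alpha> - {\<alpha>}. scaleF (coef \<alpha> \<beta>) (Mqs \<beta>))"
proof -
  have "finite (shuffle_support \<alpha>)"
    using shuffle_support_subset_comps[OF assms] finite_comps by (rule finite_subset)
  then show ?thesis
    using self_in_shuffle_support[OF assms] coef_self[OF comps_pos[OF assms]]
    by (simp add: Sshuf_eq_sum sum.remove)
qed

lemma Mqs_in_span_Sshuf: "\<alpha> \<in> comps n \<Longrightarrow> Mqs \<alpha> \<in> F.span (Sshuf ` comps n)"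
proof (induction "card (Iset \<alpha>)" arbitrary: \<alpha> rule: less_induct)
  case less
  have "Mqs \<alpha> = Sshuf \<alpha> - (\<Sum>\<beta>\<in>shuffle_support \<alpha> - {\<alpha>}. scaleF (coef \<alpha> \<beta>) (Mqs \<beta>))"
    using Sshuf_unitriangular[OF less.prems] by simp
  also have "\<dots> \<in> F.span (Sshuf ` comps n)"
  proof (intro F.span_diff F.span_sum F.span_scale)
    show "Sshuf \<alpha> \<in> F.span (Sshuf ` comps n)"
      using less.prems by (intro F.span_base) simp
    fix \<beta> assume "\<beta> \<in> shuffle_support \<alpha> - {\<alpha>}"
    then have "Iset \<beta> \<subset> Iset \<alpha>" "\<beta> \<in> comps n"
      using Iset_psubset_if_in_shuffle_support[OF less.prems]
        shuffle_support_subset_comps[OF less.prems]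
      by auto
    then show "Mqs \<beta> \<in> F.span (Sshuf ` comps n)"
      using less.hyps psubset_card_mono[OF finite_Iset] by blast
  qed
  finally show ?case .
qed

lemma span_Sshuf_eq_QSym: "F.span (Sshuf ` comps n) = QSym n"
  unfolding QSym_def F.span_eq
proof
  show "Sshuf ` comps n \<subseteq> F.span (Mqs ` comps n)"
  proof
    fix f assume "f \<in> Sshuf ` comps n"
    then obtain \<alpha> where "\<alpha> \<in> comps n" "f = Sshuf \<alpha>"
      by blast
    have "Sshuf \<alpha> \<in> F.span (Mqs ` comps n)"
      using shuffle_support_subset_comps[OF \<open>\<alpha> \<in> comps n\<close>] unfolding Sshuf_eq_sum
      by (intro F.span_sum F.span_scale) (auto intro: F.span_base)
    then show "f \<in> F.span (Mqs ` comps n)"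
      using \<open>f = Sshuf \<alpha>\<close> by simp
  qed
  show "Mqs ` comps n \<subseteq> F.span (Sshuf ` comps n)"
    using Mqs_in_span_Sshuf by blast
qed

theorem mainTheorem1:
  fixes n :: nat
  assumes "0 < n"
  shows "\<not> module.dependent scaleF (Sshuf ` comps n)
         \<and> module.span scaleF (Sshuf ` comps n) = QSym n"
proof
  have "F.dim (Sshuf ` comps n) = F.dim (QSym n)"
    by (metis F.dim_span span_Sshuf_eq_QSym)
  then have "F.dim (Sshuf ` comps n) = card (comps n)"
    by (simp add: dim_QSym)
  then have "card (Sshuf ` comps n) \<le> F.dim (Sshuf ` comps n)"
    using card_image_le[OF finite_comps] by simp
  then have "F.independent (Sshuf ` comps n)"
    using finite_comps by (intro F.independent_if_card_le_dim) simp_all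
  then show "\<not> module.dependent scaleF (Sshuf ` comps n)" .
  show "module.span scaleF (Sshuf ` comps n) = QSym n"
    by (rule span_Sshuf_eq_QSym)
qed

end
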